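(* Let $\lambda>0$ and $\delta\in(0,1)$, and let $\mathsf{T}$ be a fixed plane tree with $i\ge 1$ vertices. For each sufficiently large $k$, let $\ell=\lceil\lambda k\rceil$ and $d=\lceil\delta\lambda k\rceil$. Choose uniformly at random a plane tree with $\ell$ vertices whose root has degree $d$. Let $\beta_k(\mathsf{T})$ be the number of its principal subtrees that are isomorphic to $\mathsf{T}$, divided by $d$. Then $\beta_k(\mathsf{T})$ is concentrated at $$\mu_\beta(\mathsf{T})=\frac{(1-\delta)^{i-1}}{(2-\delta)^{2i-1}}.$$
   Context: A plane tree is a rooted tree in which the children of each vertex are linearly ordered. The principal subtrees of a rooted tree are the subtrees rooted at the children of the root; isomorphism is isomorphism of plane trees. A sequence of random variables $(\xi_k)$ is concentrated at a constant $\mu$ if for every $\varepsilon>0$ there is $K$ such that $\mathbb{P}[|\xi_k-\mu|\le\varepsilon]>1-\varepsilon$ for all $k\ge K$. *)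

theory Defs
  imports "HOL-Probability.Probability"
begin

text \<open>Plane trees: a vertex together with the ordered list of its children's subtrees.
  Two plane trees are isomorphic (as plane trees) iff they are equal as values of this datatype.\<close>
datatype ptree = Node "ptree list"

fun nverts :: "ptree \<Rightarrow> nat" where
  "nverts (Node ts) = Suc (sum_list (map nverts ts))"

fun principal_subtrees :: "ptree \<Rightarrow> ptree list" where
  "principal_subtrees (Node ts) = ts"

definition root_degree :: "ptree \<Rightarrow> nat" where
  "root_degree t = length (principal_subtrees t)"

definition trees_with :: "nat \<Rightarrow> nat \<Rightarrow> ptree set" where
  "trees_with l d = {t. nverts t = l \<and> root_degree t = d}"

definition beta_frac :: "nat \<Rightarrow> ptree \<Rightarrow> ptree \<Rightarrow> real" where
  "beta_frac d T t = real (count_list (principal_subtrees t) T) / real d"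

end

theory Submission
  imports Defs
begin

text \<open>Deleting the root identifies the trees in question with forests of \<open>d\<close> plane trees with
  \<open>n = \<ell> - 1\<close> vertices in total; there are \<open>d (2n-d-1)! / (n! (n-d)!)\<close> of them (a ballot number).
  Prescribing the trees at one (two) positions of such a forest leaves a forest with one (two) trees
  and \<open>i\<close> (\<open>2i\<close>) vertices fewer, so the first two moments of the number of principal subtrees
  equal to \<open>T\<close> are ratios of ballot numbers. For \<open>n \<sim> \<lambda>k\<close> and \<open>d \<sim> \<delta>\<lambda>k\<close> these ratios tend to
  \<open>\<mu>\<close> and \<open>\<mu>\<^sup>2\<close>, so the mean square deviation of \<open>\<beta>\<^sub>k(T)\<close> from \<open>\<mu>\<close> tends to \<open>0\<close>
  and Chebyshev's inequality gives concentration.\<close>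

section \<open>Forests and ballot numbers\<close>

definition forests :: "nat \<Rightarrow> nat \<Rightarrow> ptree list set" where
  "forests n d = {ts. length ts = d \<and> sum_list (map nverts ts) = n}"

definition num_forests :: "nat \<Rightarrow> nat \<Rightarrow> nat" where
  "num_forests n d = card (forests n d)"

lemma nverts_pos: "0 < nverts t"
  by (cases t) auto

lemma length_le_sum_nverts: "length ts \<le> sum_list (map nverts ts)"
proof (induction ts)
  case (Cons t ts)
  then show ?case using nverts_pos[of t] by simp
qed simp

lemma finite_nverts_le: "finite {t. nverts t \<le> n}"
proof (induction n)
  case 0
  then show ?case
    by (simp add: nverts_pos[THEN gr_implies_not0])
next
  case (Suc n)
  have "{t. nverts t \<le> Suc n} \<subseteq> Node ` {ts. set ts \<subseteq> {t. nverts t \<le> n} \<and> length ts \<le> n}"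
  proof
    fix t assume "t \<in> {t. nverts t \<le> Suc n}"
    then obtain ts where "t = Node ts" and sum: "sum_list (map nverts ts) \<le> n"
      by (cases t) auto
    moreover have "set ts \<subseteq> {t. nverts t \<le> n}"
      using sum member_le_sum_list[of _ "map nverts ts"] by fastforce
    ultimately show "t \<in> Node ` {ts. set ts \<subseteq> {t. nverts t \<le> n} \<and> length ts \<le> n}"
      using length_le_sum_nverts[of ts] by auto
  qed
  then show ?case
    using finite_lists_length_le[OF Suc.IH] finite_subset by blast
qed

lemma finite_forests: "finite (forests n d)"
proof -
  have "forests n d \<subseteq> {ts. set ts \<subseteq> {t. nverts t \<le> n} \<and> length ts \<le> n}"
    unfolding forests_def
    using member_le_sum_list[of _ "map nverts _"] length_le_sum_nverts by fastforce
  then show ?thesis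
    using finite_lists_length_le[OF finite_nverts_le] finite_subset by blast
qed

lemma trees_with_Suc: "trees_with (Suc n) d = Node ` forests n d"
proof -
  have "t \<in> trees_with (Suc n) d \<longleftrightarrow> t \<in> Node ` forests n d" for t
    by (cases t) (auto simp: trees_with_def forests_def root_degree_def)
  then show ?thesis by blast
qed

lemma num_forests_0_0: "num_forests 0 0 = 1"
proof -
  have "forests 0 0 = {[]}" by (auto simp: forests_def)
  then show ?thesis by (simp add: num_forests_def)
qed

lemma num_forests_0_right:
  assumes "0 < n"
  shows "num_forests n 0 = 0"
proof -
  have "forests n 0 = {}" using assms by (auto simp: forests_def)
  then show ?thesis by (simp add: num_forests_def)
qed

lemma num_forests_eq_0_if_less:
  assumes "n < d"
  shows "num_forests n d = 0"
proof -
  have "ts \<notin> forests n d" for ts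
    using assms length_le_sum_nverts[of ts] by (auto simp: forests_def)
  then have "forests n d = {}" by blast
  then show ?thesis by (simp add: num_forests_def)
qed

fun graft :: "ptree list \<Rightarrow> ptree list" where
  "graft (t # Node cs # ts) = Node (t # cs) # ts"
| "graft ts = ts"

text \<open>Either the first tree is a single vertex, or detaching the first principal subtree of the
  first tree (undoing \<^const>\<open>graft\<close>) yields a forest with one more tree.\<close>

lemma forests_split:
  assumes "1 \<le> n" "1 \<le> d"
  shows "forests n d = Cons (Node []) ` forests (n - 1) (d - 1) \<union> graft ` forests n (Suc d)"
proof (intro equalityI subsetI)
  fix ts assume ts: "ts \<in> forests n d"
  then obtain cs r where ts_eq: "ts = Node cs # r"
    using assms by (cases ts) (auto simp: forests_def elim: ptree.exhaust)
  show "ts \<in> Cons (Node []) ` forests (n - 1) (d - 1) \<union> graft ` forests n (Suc d)"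
  proof (cases cs)
    case Nil
    then show ?thesis using ts ts_eq by (auto simp: forests_def)
  next
    case (Cons c cs')
    then have "c # Node cs' # r \<in> forests n (Suc d)" and "graft (c # Node cs' # r) = ts"
      using ts ts_eq by (auto simp: forests_def)
    then show ?thesis by blast
  qed
next
  fix ts assume "ts \<in> Cons (Node []) ` forests (n - 1) (d - 1) \<union> graft ` forests n (Suc d)"
  then show "ts \<in> forests n d"
  proof
    assume "ts \<in> Cons (Node []) ` forests (n - 1) (d - 1)"
    then show ?thesis using assms by (auto simp: forests_def)
  next
    assume "ts \<in> graft ` forests n (Suc d)"
    then obtain xs where "xs \<in> forests n (Suc d)" "ts = graft xs" by blast
    then show ?thesis
      using assms by (cases xs rule: graft.cases) (auto simp: forests_def)
  qed
qed

lemma num_forests_rec: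
  assumes "1 \<le> n" "1 \<le> d"
  shows "num_forests n d = num_forests (n - 1) (d - 1) + num_forests n (Suc d)"
proof -
  have grafted: "\<exists>c cs r. zs = c # Node cs # r" if "zs \<in> forests n (Suc d)" for zs
    using that assms by (cases zs rule: graft.cases) (auto simp: forests_def)
  have "inj_on graft (forests n (Suc d))"
  proof (rule inj_onI)
    fix xs ys assume "xs \<in> forests n (Suc d)" "ys \<in> forests n (Suc d)" "graft xs = graft ys"
    moreover obtain c cs r c' cs' r' where "xs = c # Node cs # r" "ys = c' # Node cs' # r'"
      using grafted calculation by meson
    ultimately show "xs = ys" by simp
  qed
  moreover have "Cons (Node []) ` forests (n - 1) (d - 1) \<inter> graft ` forests n (Suc d) = {}"
  proof -
    have "graft zs \<noteq> Node [] # rs" if "zs \<in> forests n (Suc d)" for zs rs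
      using grafted[OF that] by auto
    then show ?thesis
      by (auto simp: image_iff) (metis)
  qed
  ultimately show ?thesis
    unfolding num_forests_def forests_split[OF assms]
    by (simp add: card_Un_disjoint finite_forests card_image)
qed

lemma num_forests_diag: "num_forests n n = 1"
proof (induction n)
  case (Suc n)
  then show ?case
    using num_forests_rec[of "Suc n" "Suc n"] num_forests_eq_0_if_less[of "Suc n" "Suc (Suc n)"] by simp
qed (rule num_forests_0_0)

lemma num_forests_binomial_diff:
  assumes "1 \<le> n" "d \<le> n"
  shows "int (num_forests n d) = int ((2*n - d - 1) choose (n - 1)) - int ((2*n - d - 1) choose n)"
  using assms
proof (induction n arbitrary: d)
  case (Suc n)
  from \<open>d \<le> Suc n\<close> show ?case
  proof (induction d rule: inc_induct)
    case base
    then show ?case using num_forests_diag by simp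
  next
    case (step d)
    show ?case
    proof (cases "d = 0")
      case True
      then show ?thesis
        using num_forests_0_right[of "Suc n"] binomial_symmetric[of n "2*n + 1"] by simp
    next
      case False
      define q where "q = 2*n - d"
      have "n \<ge> 1" "d - 1 \<le> n" "2*n - (d - 1) - 1 = q" "2 * Suc n - d - 1 = Suc q"
        using False step.hyps by (auto simp: q_def)
      moreover have "Suc q choose n = (q choose (n - 1)) + (q choose n)"
        using binomial_Suc_Suc[of q "n - 1"] \<open>n \<ge> 1\<close> by simp
      ultimately show ?thesis
        using num_forests_rec[of "Suc n" d] Suc.IH[of "d - 1"] step.IH False
        by (simp add: q_def)
    qed
  qed
qed simp

lemma num_forests_closed:
  assumes "1 \<le> d" "d \<le> n"
  shows "real (num_forests n d) = real d * fact (2*n - d - 1) / (fact n * fact (n - d))"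
proof (cases "d = n")
  case True
  then show ?thesis
    using assms num_forests_diag by (simp add: fact_reduce[of n] mult_2)
next
  case False
  define M where "M = 2*n - d - 1"
  have "real (num_forests n d) = real (M choose (n - 1)) - real (M choose n)"
    using arg_cong[OF num_forests_binomial_diff[OF _ assms(2)], of real_of_int] assms
    by (simp add: M_def)
  also have "\<dots> = fact M / (fact (n - 1) * fact (n - d)) - fact M / (fact n * fact (n - d - 1))"
    using assms False by (simp add: binomial_fact M_def Suc_diff_Suc numeral_2_eq_2)
  also have "\<dots> = real d * fact M / (fact n * fact (n - d))"
    using assms False
    by (simp add: fact_reduce[of n] fact_reduce[of "n - d"] of_nat_diff field_simps)
  finally show ?thesis by (simp add: M_def)
qed

lemma num_forests_pos:
  assumes "1 \<le> d" "d \<le> n"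
  shows "0 < num_forests n d"
proof -
  have "0 < real (num_forests n d)"
    using assms by (simp add: num_forests_closed)
  then show ?thesis by simp
qed

section \<open>Ratios of ballot numbers and their limits\<close>

definition falling_fact :: "nat \<Rightarrow> nat \<Rightarrow> real" where
  "falling_fact m c = (\<Prod>j<c. real (m - j))"

lemma falling_fact_pos: "c \<le> m \<Longrightarrow> 0 < falling_fact m c"
  by (auto simp: falling_fact_def intro!: prod_pos)

lemma fact_eq_fact_mult_falling_fact: "c \<le> m \<Longrightarrow> fact m = fact (m - c) * falling_fact m c"
proof (induction c)
  case (Suc c)
  then show ?case
    by (simp add: falling_fact_def fact_reduce[of "m - c"] Suc_diff_Suc)
qed (simp add: falling_fact_def)

text \<open>The probability that \<open>b\<close> given positions of a uniformly random forest in
  \<^term>\<open>forests n d\<close> carry given trees with \<open>a\<close> vertices in total.\<close>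

definition forest_ratio :: "nat \<Rightarrow> nat \<Rightarrow> nat \<Rightarrow> nat \<Rightarrow> real" where
  "forest_ratio a b n d = real (num_forests (n - a) (d - b)) / real (num_forests n d)"

lemma forest_ratio_eq:
  assumes "b \<le> a" "b < d" "a + d \<le> n + b"
  shows "forest_ratio a b n d = real (d - b) / real d * falling_fact n a
    * falling_fact (n - d) (a - b) / falling_fact (2*n - d - 1) (2*a - b)"
proof -
  have "n - d - (a - b) = n - a - (d - b)" "2*n - d - 1 - (2*a - b) = 2*(n - a) - (d - b) - 1"
    using assms by simp_all
  then have fact_n: "(fact n :: real) = fact (n - a) * falling_fact n a"
    and fact_n_d: "(fact (n - d) :: real) = fact (n - a - (d - b)) * falling_fact (n - d) (a - b)"
    and fact_2n_d: "(fact (2*n - d - 1) :: real)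
      = fact (2*(n - a) - (d - b) - 1) * falling_fact (2*n - d - 1) (2*a - b)"
    using fact_eq_fact_mult_falling_fact[of a n] fact_eq_fact_mult_falling_fact[of "a - b" "n - d"]
      fact_eq_fact_mult_falling_fact[of "2*a - b" "2*n - d - 1"] assms
    by simp_all
  have closed_ab: "real (num_forests (n - a) (d - b))
      = real (d - b) * fact (2*(n - a) - (d - b) - 1) / (fact (n - a) * fact (n - a - (d - b)))"
    and closed: "real (num_forests n d) = real d * fact (2*n - d - 1) / (fact n * fact (n - d))"
    using assms by (simp_all add: num_forests_closed)
  have cancel: "(x * X / (A * Y)) / (D * (X * R) / (A * P * (Y * Q))) = x / D * P * Q / R"
    if "0 < X" "0 < A" "0 < Y" "0 < D" "0 < P" "0 < Q" "0 < R" for x X A Y D P Q R :: real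
    using that by (simp add: field_simps)
  show ?thesis
    unfolding forest_ratio_def closed_ab closed fact_n fact_n_d fact_2n_d
    by (rule cancel) (use assms in \<open>simp_all add: falling_fact_pos\<close>)
qed

lemma tendsto_of_nat_diff_div:
  assumes lim: "((\<lambda>x. real (m x) / s x) \<longlongrightarrow> g) F" and s: "filterlim s at_top F"
  shows "((\<lambda>x. real (m x - j) / s x) \<longlongrightarrow> g) F"
proof (rule tendsto_sandwich)
  have "((\<lambda>x. real j / s x) \<longlongrightarrow> 0) F"
    by (rule tendsto_divide_0[OF tendsto_const filterlim_at_top_imp_at_infinity[OF s]])
  from tendsto_diff[OF lim this]
  show "((\<lambda>x. real (m x) / s x - real j / s x) \<longlongrightarrow> g) F" by simp
  have pos: "\<forall>\<^sub>F x in F. 0 < s x"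
    using s by (simp add: filterlim_at_top_dense)
  then show "\<forall>\<^sub>F x in F. real (m x) / s x - real j / s x \<le> real (m x - j) / s x"
    by eventually_elim (simp add: diff_divide_distrib[symmetric] divide_right_mono)
  show "\<forall>\<^sub>F x in F. real (m x - j) / s x \<le> real (m x) / s x"
    using pos by eventually_elim (simp add: divide_right_mono)
qed (rule lim)

lemma tendsto_falling_fact_div_power:
  assumes "((\<lambda>x. real (m x) / s x) \<longlongrightarrow> g) F" "filterlim s at_top F"
  shows "((\<lambda>x. falling_fact (m x) c / s x ^ c) \<longlongrightarrow> g ^ c) F"
proof -
  have "((\<lambda>x. \<Prod>j<c. real (m x - j) / s x) \<longlongrightarrow> (\<Prod>j<c. g)) F"
    by (intro tendsto_prod tendsto_of_nat_diff_div assms)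
  then show ?thesis by (simp add: falling_fact_def prod_dividef)
qed

lemma filterlim_at_top_of_ratio:
  fixes f s :: "'a \<Rightarrow> real"
  assumes "((\<lambda>x. f x / s x) \<longlongrightarrow> g) F" "0 < g" "filterlim s at_top F"
  shows "filterlim f at_top F"
proof -
  have "filterlim (\<lambda>x. f x / s x * s x) at_top F"
    using filterlim_tendsto_pos_mult_at_top assms by blast
  moreover have "\<forall>\<^sub>F x in F. 0 < s x"
    using assms(3) by (simp add: filterlim_at_top_dense)
  then have "\<forall>\<^sub>F x in F. f x / s x * s x = f x"
    by eventually_elim simp
  ultimately show ?thesis using filterlim_cong by fastforce
qed

lemma tendsto_of_nat_mult_diff_div:
  fixes n d :: "'a \<Rightarrow> nat"
  assumes n: "filterlim (\<lambda>x. real (n x)) at_top F"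
    and d: "((\<lambda>x. real (d x) / real (n x)) \<longlongrightarrow> \<delta>) F" and "\<delta> < real p"
  shows "((\<lambda>x. real (p * n x - d x) / real (n x)) \<longlongrightarrow> real p - \<delta>) F"
proof (rule Lim_transform_eventually[OF tendsto_diff[OF tendsto_const d]])
  have "\<forall>\<^sub>F x in F. 0 < real (n x)"
    using filterlim_at_top_dense[THEN iffD1, OF n, rule_format, of 0] by simp
  moreover have "\<forall>\<^sub>F x in F. real (d x) / real (n x) < real p"
    using order_tendstoD(2)[OF d assms(3)] .
  ultimately show "\<forall>\<^sub>F x in F. real p - real (d x) / real (n x) = real (p * n x - d x) / real (n x)"
  proof eventually_elim
    case (elim x)
    then have "d x \<le> p * n x"
      by (simp add: divide_less_eq flip: of_nat_mult)
    with elim show ?case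
      by (simp add: of_nat_diff diff_divide_distrib)
  qed
qed

lemma tendsto_forest_ratio:
  fixes n d :: "'a \<Rightarrow> nat"
  assumes n: "filterlim (\<lambda>x. real (n x)) at_top F"
    and d: "((\<lambda>x. real (d x) / real (n x)) \<longlongrightarrow> \<delta>) F"
    and \<delta>: "0 < \<delta>" "\<delta> < 1" and "b \<le> a"
  shows "((\<lambda>x. forest_ratio a b (n x) (d x)) \<longlongrightarrow> (1 - \<delta>)^(a - b) / (2 - \<delta>)^(2*a - b)) F"
proof -
  have n_pos: "\<forall>\<^sub>F x in F. 0 < real (n x)"
    using filterlim_at_top_dense[THEN iffD1, OF n, rule_format, of 0] by simp
  have n_n: "((\<lambda>x. real (n x) / real (n x)) \<longlongrightarrow> 1) F"
    by (rule Lim_transform_eventually[OF tendsto_const]) (use n_pos in \<open>auto elim: eventually_mono\<close>)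
  have n_d: "((\<lambda>x. real (n x - d x) / real (n x)) \<longlongrightarrow> 1 - \<delta>) F"
    using tendsto_of_nat_mult_diff_div[OF n d, of 1] \<delta> by simp
  have two_n_d: "((\<lambda>x. real (2 * n x - d x - 1) / real (n x)) \<longlongrightarrow> 2 - \<delta>) F"
    using tendsto_of_nat_diff_div[where j = 1, OF tendsto_of_nat_mult_diff_div[OF n d, of 2] n] \<delta> by simp
  have d_b: "((\<lambda>x. real (d x - b) / real (n x)) \<longlongrightarrow> \<delta>) F"
    using d n by (rule tendsto_of_nat_diff_div)
  have d_top: "filterlim (\<lambda>x. real (d x)) at_top F"
    using d \<delta>(1) n by (rule filterlim_at_top_of_ratio)
  have d_large: "\<forall>\<^sub>F x in F. b < d x"
    using filterlim_at_top_dense[THEN iffD1, OF d_top, rule_format, of "real b"] by simp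
  have n_d_top: "filterlim (\<lambda>x. real (n x - d x)) at_top F"
    using n_d _ n by (rule filterlim_at_top_of_ratio) (use \<delta> in simp)
  have n_d_large: "\<forall>\<^sub>F x in F. a < n x - d x"
    using filterlim_at_top_dense[THEN iffD1, OF n_d_top, rule_format, of "real a"] by simp
  let ?approx = "\<lambda>x. (real (d x - b) / real (n x)) / (real (d x) / real (n x))
      * (falling_fact (n x) a / real (n x) ^ a)
      * (falling_fact (n x - d x) (a - b) / real (n x) ^ (a - b))
      / (falling_fact (2 * n x - d x - 1) (2*a - b) / real (n x) ^ (2*a - b))"
  have "(?approx \<longlongrightarrow> \<delta> / \<delta> * 1 ^ a * (1 - \<delta>)^(a - b) / (2 - \<delta>)^(2*a - b)) F"
    by (intro tendsto_intros d_b d tendsto_falling_fact_div_power n_n n_d two_n_d n) (use \<delta> in auto)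
  then have lim: "(?approx \<longlongrightarrow> (1 - \<delta>)^(a - b) / (2 - \<delta>)^(2*a - b)) F"
    using \<delta> by simp
  have powers: "real m ^ a * real m ^ (a - b) = real m ^ (2*a - b)" for m
    using \<open>b \<le> a\<close> by (simp add: power_add[symmetric] mult_2)
  show ?thesis
  proof (rule Lim_transform_eventually[OF lim])
    show "\<forall>\<^sub>F x in F. ?approx x = forest_ratio a b (n x) (d x)"
      using n_pos d_large n_d_large
    proof eventually_elim
      case (elim x)
      then have "0 < falling_fact (2 * n x - d x - 1) (2*a - b)"
        by (simp add: falling_fact_pos)
      then show ?case
        using elim \<open>b \<le> a\<close> powers[of "n x", symmetric]
        by (simp add: forest_ratio_eq field_simps)
    qed
  qed
qed

lemma tendsto_nat_ceiling_mult_div: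
  fixes c :: real
  assumes "0 \<le> c"
  shows "(\<lambda>k. real (nat \<lceil>c * real k\<rceil>) / real k) \<longlonglongrightarrow> c"
proof (rule tendsto_sandwich)
  have "real (nat \<lceil>c * real k\<rceil>) = of_int \<lceil>c * real k\<rceil>" for k
    using assms by (simp add: of_nat_nat)
  then have lower: "c * real k \<le> real (nat \<lceil>c * real k\<rceil>)"
    and upper: "real (nat \<lceil>c * real k\<rceil>) \<le> c * real k + 1" for k
    by (simp_all add: le_of_int_ceiling of_int_ceiling_le_add_one)
  show "\<forall>\<^sub>F k in sequentially. c \<le> real (nat \<lceil>c * real k\<rceil>) / real k"
    using lower by (intro eventually_mono[OF eventually_gt_at_top[of "0::nat"]]) (simp add: field_simps)
  show "\<forall>\<^sub>F k in sequentially. real (nat \<lceil>c * real k\<rceil>) / real k \<le> c + 1 / real k"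
    using upper by (intro eventually_mono[OF eventually_gt_at_top[of "0::nat"]]) (simp add: field_simps)
  show "(\<lambda>k. c + 1 / real k) \<longlonglongrightarrow> c"
    using tendsto_add[OF tendsto_const tendsto_divide_0[OF tendsto_const
        filterlim_at_top_imp_at_infinity[OF filterlim_real_sequentially]], of c 1]
    by simp
qed simp

section \<open>Moments of the number of copies of a tree\<close>

definition insert_at :: "nat \<Rightarrow> 'a \<Rightarrow> 'a list \<Rightarrow> 'a list" where
  "insert_at j x xs = take j xs @ x # drop j xs"

definition delete_at :: "nat \<Rightarrow> 'a list \<Rightarrow> 'a list" where
  "delete_at j xs = take j xs @ drop (Suc j) xs"

lemma length_insert_at [simp]: "length (insert_at j x xs) = Suc (length xs)"
  by (simp add: insert_at_def)

lemma length_delete_at [simp]: "j < length xs \<Longrightarrow> length (delete_at j xs) = length xs - 1"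
  by (simp add: delete_at_def)

lemma nth_insert_at_same [simp]: "j \<le> length xs \<Longrightarrow> insert_at j x xs ! j = x"
  by (simp add: insert_at_def nth_append)

lemma nth_delete_at_less: "i < j \<Longrightarrow> j < length xs \<Longrightarrow> delete_at j xs ! i = xs ! i"
  by (simp add: delete_at_def nth_append)

lemma delete_at_insert_at [simp]: "j \<le> length xs \<Longrightarrow> delete_at j (insert_at j x xs) = xs"
  by (simp add: insert_at_def delete_at_def)

lemma insert_at_delete_at [simp]: "j < length xs \<Longrightarrow> insert_at j (xs ! j) (delete_at j xs) = xs"
  by (simp add: insert_at_def delete_at_def id_take_nth_drop[symmetric])

lemma sum_list_map_insert_at [simp]:
  fixes f :: "'a \<Rightarrow> 'b::comm_monoid_add"
  shows "sum_list (map f (insert_at j x xs)) = f x + sum_list (map f xs)"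
proof -
  have "sum_list (map f xs) = sum_list (map f (take j xs)) + sum_list (map f (drop j xs))"
    by (metis append_take_drop_id map_append sum_list_append)
  then show ?thesis by (simp add: insert_at_def add_ac)
qed

lemma card_forests_nth_eq:
  assumes "j < d" "nverts T \<le> n"
  shows "card {ts \<in> forests n d. ts ! j = T \<and> Q (delete_at j ts)}
    = card {rs \<in> forests (n - nverts T) (d - 1). Q rs}"
proof -
  have sum_delete_at: "sum_list (map nverts (delete_at j ts)) = sum_list (map nverts ts) - nverts (ts ! j)"
    if "j < length ts" for ts
    using sum_list_map_insert_at[of nverts j "ts ! j" "delete_at j ts"] that by simp
  have "bij_betw (insert_at j T) {rs \<in> forests (n - nverts T) (d - 1). Q rs}
      {ts \<in> forests n d. ts ! j = T \<and> Q (delete_at j ts)}"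
    by (rule bij_betw_byWitness[where f' = "delete_at j"])
      (use assms in \<open>auto simp: forests_def sum_delete_at\<close>)
  then show ?thesis by (simp add: bij_betw_same_card)
qed

lemma card_forests_nth:
  assumes "j < d" "nverts T \<le> n"
  shows "card {ts \<in> forests n d. ts ! j = T} = num_forests (n - nverts T) (d - 1)"
  using card_forests_nth_eq[OF assms, of "\<lambda>_. True"] by (simp add: num_forests_def)

lemma card_forests_nth_nth:
  assumes "j \<noteq> j'" "j < d" "j' < d" "2 * nverts T \<le> n"
  shows "card {ts \<in> forests n d. ts ! j = T \<and> ts ! j' = T} = num_forests (n - 2 * nverts T) (d - 2)"
  using assms
proof (induction j j' rule: linorder_wlog)
  case (le j j')
  then have "j < j'" by simp
  then have "{ts \<in> forests n d. ts ! j = T \<and> ts ! j' = T}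
      = {ts \<in> forests n d. ts ! j' = T \<and> delete_at j' ts ! j = T}"
    using le.prems by (auto simp: forests_def nth_delete_at_less)
  also have "card \<dots> = card {rs \<in> forests (n - nverts T) (d - 1). rs ! j = T}"
    using le.prems by (intro card_forests_nth_eq) auto
  also have "\<dots> = num_forests (n - nverts T - nverts T) (d - 1 - 1)"
    using le.prems \<open>j < j'\<close> by (intro card_forests_nth) auto
  finally show ?case by (simp add: mult_2 numeral_2_eq_2)
next
  case (sym j j')
  then show ?case by (simp add: conj_commute)
qed

lemma of_nat_count_list_eq_sum:
  "(of_nat (count_list xs x) :: 'a::semiring_1) = (\<Sum>j<length xs. of_bool (xs ! j = x))"
  by (induction xs) (simp_all add: sum.lessThan_Suc_shift del: sum.lessThan_Suc)

lemma sum_count_list_forests: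
  assumes "nverts T \<le> n"
  shows "(\<Sum>ts\<in>forests n d. real (count_list ts T)) = real d * real (num_forests (n - nverts T) (d - 1))"
proof -
  have "(\<Sum>ts\<in>forests n d. real (count_list ts T))
      = (\<Sum>ts\<in>forests n d. \<Sum>j<d. of_bool (ts ! j = T))"
    by (rule sum.cong) (simp_all add: of_nat_count_list_eq_sum forests_def)
  also have "\<dots> = (\<Sum>j<d. \<Sum>ts\<in>forests n d. of_bool (ts ! j = T))"
    by (rule sum.swap)
  also have "\<dots> = (\<Sum>j<d. real (num_forests (n - nverts T) (d - 1)))"
    by (rule sum.cong) (simp_all add: finite_forests Int_def card_forests_nth assms)
  finally show ?thesis by simp
qed

lemma sum_count_list_sq_forests:
  assumes "2 * nverts T \<le> n"
  shows "(\<Sum>ts\<in>forests n d. real (count_list ts T) ^ 2)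
    = real d * (real (num_forests (n - nverts T) (d - 1))
        + (real d - 1) * real (num_forests (n - 2 * nverts T) (d - 2)))"
proof -
  define F1 where "F1 = real (num_forests (n - nverts T) (d - 1))"
  define F2 where "F2 = real (num_forests (n - 2 * nverts T) (d - 2))"
  have "(\<Sum>ts\<in>forests n d. real (count_list ts T) ^ 2)
      = (\<Sum>ts\<in>forests n d. \<Sum>j<d. \<Sum>j'<d. of_bool (ts ! j = T \<and> ts ! j' = T))"
  proof (rule sum.cong[OF refl])
    fix ts assume "ts \<in> forests n d"
    then have "real (count_list ts T) ^ 2
        = (\<Sum>j<d. of_bool (ts ! j = T)) * (\<Sum>j'<d. of_bool (ts ! j' = T))"
      by (simp only: of_nat_count_list_eq_sum power2_eq_square forests_def mem_Collect_eq)
    then show "real (count_list ts T) ^ 2 = (\<Sum>j<d. \<Sum>j'<d. of_bool (ts ! j = T \<and> ts ! j' = T))"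
      by (simp only: sum_product of_bool_conj)
  qed
  also have "\<dots> = (\<Sum>j<d. \<Sum>j'<d. \<Sum>ts\<in>forests n d. of_bool (ts ! j = T \<and> ts ! j' = T))"
    by (simp add: sum.swap[of _ "forests n d"])
  also have "\<dots> = (\<Sum>j<d. \<Sum>j'<d. if j' = j then F1 else F2)"
    using assms
    by (intro sum.cong refl)
      (auto simp: finite_forests Int_def card_forests_nth card_forests_nth_nth F1_def F2_def)
  also have "\<dots> = (\<Sum>j<d. F1 + (real d - 1) * F2)"
  proof (rule sum.cong[OF refl])
    fix j assume "j \<in> {..<d}"
    then have "(\<Sum>j'<d. if j' = j then F1 else F2) = (\<Sum>j'<d. F2 + (if j' = j then F1 - F2 else 0))"
      by (intro sum.cong) auto
    also have "\<dots> = F1 + (real d - 1) * F2"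
      using \<open>j \<in> {..<d}\<close> by (simp add: sum.distrib algebra_simps)
    finally show "(\<Sum>j'<d. if j' = j then F1 else F2) = F1 + (real d - 1) * F2" .
  qed
  finally show ?thesis by (simp add: F1_def F2_def)
qed

definition mean_sq_dev :: "nat \<Rightarrow> real \<Rightarrow> nat \<Rightarrow> nat \<Rightarrow> real" where
  "mean_sq_dev i \<mu> n d = forest_ratio i 1 n d / d + (1 - 1 / d) * forest_ratio (2 * i) 2 n d
    - 2 * \<mu> * forest_ratio i 1 n d + \<mu>^2"

lemma mean_sq_deviation_beta_frac:
  assumes "1 \<le> d" "d \<le> n" "2 * nverts T \<le> n"
  shows "(\<Sum>t\<in>trees_with (Suc n) d. (beta_frac d T t - \<mu>)^2) / card (trees_with (Suc n) d)
    = mean_sq_dev (nverts T) \<mu> n d"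
proof -
  define N where "N = real (num_forests n d)"
  define F1 where "F1 = real (num_forests (n - nverts T) (d - 1))"
  define F2 where "F2 = real (num_forests (n - 2 * nverts T) (d - 2))"
  have "inj_on Node (forests n d)"
    by (simp add: inj_on_def)
  then have "(\<Sum>t\<in>trees_with (Suc n) d. (beta_frac d T t - \<mu>)^2) / card (trees_with (Suc n) d)
      = (\<Sum>ts\<in>forests n d. (real (count_list ts T) / d - \<mu>)^2) / N"
    by (simp add: trees_with_Suc sum.reindex card_image beta_frac_def N_def num_forests_def)
  also have "\<dots> = ((\<Sum>ts\<in>forests n d. real (count_list ts T)^2) / d^2
        - 2 * \<mu> / d * (\<Sum>ts\<in>forests n d. real (count_list ts T)) + \<mu>^2 * N) / N"
    by (simp add: power2_diff power_divide sum.distrib sum_subtractf sum_divide_distrib[symmetric]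
        sum_distrib_left[symmetric] N_def num_forests_def algebra_simps)
  also have "\<dots> = (real d * (F1 + (real d - 1) * F2) / d^2 - 2 * \<mu> / d * (real d * F1) + \<mu>^2 * N) / N"
    using assms by (simp add: sum_count_list_forests sum_count_list_sq_forests F1_def F2_def)
  also have "\<dots> = F1 / N / d + (1 - 1 / d) * (F2 / N) - 2 * \<mu> * (F1 / N) + \<mu>^2"
    using assms num_forests_pos[OF assms(1,2)] by (simp add: N_def power2_eq_square field_simps)
  finally show ?thesis
    by (simp add: mean_sq_dev_def forest_ratio_def N_def F1_def F2_def)
qed

section \<open>Concentration\<close>

lemma prob_pmf_of_set_deviation_le:
  fixes Y :: "'a \<Rightarrow> real" and e :: real
  assumes "finite A" "A \<noteq> {}" "0 < e"
  shows "1 - (\<Sum>x\<in>A. (Y x - m)^2) / (real (card A) * e^2)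
    \<le> measure_pmf.prob (pmf_of_set A) {x. \<bar>Y x - m\<bar> \<le> e}"
proof -
  define bad where "bad = {x \<in> A. e < \<bar>Y x - m\<bar>}"
  have "real (card bad) * e^2 = (\<Sum>x\<in>bad. e^2)"
    by simp
  also have "\<dots> \<le> (\<Sum>x\<in>bad. (Y x - m)^2)"
  proof (rule sum_mono)
    fix x assume "x \<in> bad"
    then have "e^2 \<le> \<bar>Y x - m\<bar>^2"
      using assms(3) by (intro power_mono) (auto simp: bad_def)
    then show "e^2 \<le> (Y x - m)^2" by simp
  qed
  also have "\<dots> \<le> (\<Sum>x\<in>A. (Y x - m)^2)"
    by (rule sum_mono2) (use assms(1) in \<open>auto simp: bad_def\<close>)
  finally have bad_le: "real (card bad) * e^2 / (real (card A) * e^2)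
      \<le> (\<Sum>x\<in>A. (Y x - m)^2) / (real (card A) * e^2)"
    by (rule divide_right_mono) simp
  have "A \<inter> {x. \<bar>Y x - m\<bar> \<le> e} = A - bad"
    by (auto simp: bad_def)
  then have "real (card (A \<inter> {x. \<bar>Y x - m\<bar> \<le> e})) = real (card A) - real (card bad)"
    using assms(1) by (simp add: card_Diff_subset bad_def of_nat_diff card_mono)
  then have "measure_pmf.prob (pmf_of_set A) {x. \<bar>Y x - m\<bar> \<le> e} = 1 - real (card bad) / card A"
    using assms by (simp add: measure_pmf_of_set field_simps)
  then show ?thesis using bad_le assms(3) by simp
qed

lemma prob_beta_frac_close:
  assumes "1 \<le> d" "d \<le> n" "2 * nverts T \<le> n" "0 < e" "mean_sq_dev (nverts T) \<mu> n d < e^3"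
  shows "1 - e < measure_pmf.prob (pmf_of_set (trees_with (Suc n) d)) {t. \<bar>beta_frac d T t - \<mu>\<bar> \<le> e}"
proof -
  let ?trees = "trees_with (Suc n) d"
  have "card ?trees = num_forests n d"
    by (simp add: trees_with_Suc card_image inj_on_def num_forests_def)
  then have "finite ?trees" "?trees \<noteq> {}"
    using num_forests_pos[OF assms(1,2)] by (auto intro: card_ge_0_finite)
  then have "1 - (\<Sum>t\<in>?trees. (beta_frac d T t - \<mu>)^2) / (real (card ?trees) * e^2)
      \<le> measure_pmf.prob (pmf_of_set ?trees) {t. \<bar>beta_frac d T t - \<mu>\<bar> \<le> e}"
    using \<open>0 < e\<close> by (rule prob_pmf_of_set_deviation_le)
  moreover have "(\<Sum>t\<in>?trees. (beta_frac d T t - \<mu>)^2) / (real (card ?trees) * e^2)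
      = mean_sq_dev (nverts T) \<mu> n d / e^2"
    using mean_sq_deviation_beta_frac[OF assms(1-3)] by (simp only: divide_divide_eq_left[symmetric])
  moreover have "mean_sq_dev (nverts T) \<mu> n d / e^2 < e"
    using assms(4,5) by (simp add: divide_less_eq power2_eq_square power3_eq_cube)
  ultimately show ?thesis
    by simp
qed

lemma tendsto_mean_sq_dev:
  fixes n d :: "'a \<Rightarrow> nat"
  assumes n: "filterlim (\<lambda>x. real (n x)) at_top F"
    and d: "((\<lambda>x. real (d x) / real (n x)) \<longlongrightarrow> \<delta>) F"
    and \<delta>: "0 < \<delta>" "\<delta> < 1" and "1 \<le> i"
  defines "\<mu> \<equiv> (1 - \<delta>) ^ (i - 1) / (2 - \<delta>) ^ (2 * i - 1)"
  shows "((\<lambda>x. mean_sq_dev i \<mu> (n x) (d x)) \<longlongrightarrow> 0) F"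
proof -
  have ratio1: "((\<lambda>x. forest_ratio i 1 (n x) (d x)) \<longlongrightarrow> \<mu>) F"
    using tendsto_forest_ratio[OF n d \<delta>, of 1 i] \<open>1 \<le> i\<close> by (simp add: \<mu>_def)
  have "\<mu>^2 = (1 - \<delta>) ^ (2 * i - 2) / (2 - \<delta>) ^ (2 * (2 * i) - 2)"
    using \<open>1 \<le> i\<close> by (simp add: \<mu>_def power_divide power_mult[symmetric] mult.commute[of _ 2]
        right_diff_distrib')
  then have ratio2: "((\<lambda>x. forest_ratio (2 * i) 2 (n x) (d x)) \<longlongrightarrow> \<mu>^2) F"
    using tendsto_forest_ratio[OF n d \<delta>, of 2 "2 * i"] \<open>1 \<le> i\<close> by simp
  have "filterlim (\<lambda>x. real (d x)) at_top F"
    using d \<delta>(1) n by (rule filterlim_at_top_of_ratio)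
  then have inv_d: "((\<lambda>x. 1 / real (d x)) \<longlongrightarrow> 0) F"
    by (intro tendsto_divide_0[OF tendsto_const] filterlim_at_top_imp_at_infinity)
  have "((\<lambda>x. forest_ratio i 1 (n x) (d x) * (1 / d x)
        + (1 - 1 / d x) * forest_ratio (2 * i) 2 (n x) (d x)
        - 2 * \<mu> * forest_ratio i 1 (n x) (d x) + \<mu>^2)
      \<longlongrightarrow> \<mu> * 0 + (1 - 0) * \<mu>^2 - 2 * \<mu> * \<mu> + \<mu>^2) F"
    by (intro tendsto_intros ratio1 ratio2 inv_d)
  then show ?thesis
    by (simp add: mean_sq_dev_def power2_eq_square)
qed

lemma eventually_beta_frac_concentrated:
  fixes n d :: "'a \<Rightarrow> nat"
  assumes n: "filterlim (\<lambda>x. real (n x)) at_top F"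
    and d: "((\<lambda>x. real (d x) / real (n x)) \<longlongrightarrow> \<delta>) F"
    and \<delta>: "0 < \<delta>" "\<delta> < 1" and "0 < e"
  shows "\<forall>\<^sub>F x in F. 1 - e < measure_pmf.prob (pmf_of_set (trees_with (Suc (n x)) (d x)))
    {t. \<bar>beta_frac (d x) T t - (1 - \<delta>) ^ (nverts T - 1) / (2 - \<delta>) ^ (2 * nverts T - 1)\<bar> \<le> e}"
proof -
  have "1 \<le> nverts T"
    using nverts_pos by (simp add: Suc_le_eq)
  from tendsto_mean_sq_dev[OF n d \<delta> this]
  have "\<forall>\<^sub>F x in F. mean_sq_dev (nverts T)
      ((1 - \<delta>) ^ (nverts T - 1) / (2 - \<delta>) ^ (2 * nverts T - 1)) (n x) (d x) < e^3"
    by (rule order_tendstoD(2)) (use \<open>0 < e\<close> in simp)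
  moreover have "\<forall>\<^sub>F x in F. 0 < d x"
    using filterlim_at_top_dense[THEN iffD1, OF filterlim_at_top_of_ratio[OF d \<delta>(1) n],
        rule_format, of 0] by simp
  moreover have "\<forall>\<^sub>F x in F. real (d x) / real (n x) < 1"
    using order_tendstoD(2)[OF d \<delta>(2)] .
  moreover have "\<forall>\<^sub>F x in F. real (2 * nverts T) < real (n x)"
    using filterlim_at_top_dense[THEN iffD1, OF n, rule_format] .
  ultimately show ?thesis
  proof eventually_elim
    case (elim x)
    then have "d x \<le> n x"
      by (auto simp: divide_less_eq split: if_splits)
    then show ?case
      using elim \<open>0 < e\<close> by (intro prob_beta_frac_close) auto
  qed
qed

theorem proposition5:
  fixes lam \<delta> :: real and T :: ptree
  assumes "lam > 0" and "0 < \<delta>" and "\<delta> < 1"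
  shows "\<forall>\<epsilon>>0. \<exists>K. \<forall>k::nat\<ge>K.
    measure_pmf.prob
      (pmf_of_set (trees_with (nat \<lceil>lam * real k\<rceil>) (nat \<lceil>\<delta> * lam * real k\<rceil>)))
      {t. \<bar>beta_frac (nat \<lceil>\<delta> * lam * real k\<rceil>) T t
            - (1 - \<delta>) ^ (nverts T - 1) / (2 - \<delta>) ^ (2 * nverts T - 1)\<bar> \<le> \<epsilon>}
    > 1 - \<epsilon>"
proof -
  define n where "n k = nat \<lceil>lam * real k\<rceil> - 1" for k :: nat
  define d where "d k = nat \<lceil>\<delta> * lam * real k\<rceil>" for k :: nat
  have n_lim: "(\<lambda>k. real (n k) / real k) \<longlonglongrightarrow> lam"
    unfolding n_def using assms
    by (intro tendsto_of_nat_diff_div tendsto_nat_ceiling_mult_div filterlim_real_sequentially) simp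
  have d_lim: "(\<lambda>k. real (d k) / real k) \<longlonglongrightarrow> \<delta> * lam"
    unfolding d_def using assms by (intro tendsto_nat_ceiling_mult_div) simp
  have n_top: "filterlim (\<lambda>k. real (n k)) at_top sequentially"
    using n_lim assms(1) filterlim_real_sequentially by (rule filterlim_at_top_of_ratio)
  have "(\<lambda>k. (real (d k) / real k) / (real (n k) / real k)) \<longlonglongrightarrow> \<delta> * lam / lam"
    using assms by (intro tendsto_divide d_lim n_lim) simp
  moreover have "\<forall>\<^sub>F k in sequentially.
      (real (d k) / real k) / (real (n k) / real k) = real (d k) / real (n k)"
    using eventually_gt_at_top[of "0::nat"] by eventually_elim simp
  ultimately have d_n_lim: "(\<lambda>k. real (d k) / real (n k)) \<longlonglongrightarrow> \<delta>"
    using assms(1) by (simp add: Lim_transform_eventually)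
  have trees_size: "\<forall>\<^sub>F k in sequentially. nat \<lceil>lam * real k\<rceil> = Suc (n k)"
    using assms(1) by (intro eventually_mono[OF eventually_gt_at_top[of "0::nat"]]) (simp add: n_def)
  have "\<forall>\<^sub>F k in sequentially. measure_pmf.prob
      (pmf_of_set (trees_with (nat \<lceil>lam * real k\<rceil>) (nat \<lceil>\<delta> * lam * real k\<rceil>)))
      {t. \<bar>beta_frac (nat \<lceil>\<delta> * lam * real k\<rceil>) T t
            - (1 - \<delta>) ^ (nverts T - 1) / (2 - \<delta>) ^ (2 * nverts T - 1)\<bar> \<le> e}
    > 1 - e" if "0 < e" for e
    using eventually_beta_frac_concentrated[OF n_top d_n_lim assms(2,3) that, of T] trees_size
    by eventually_elim (simp add: d_def)
  then show ?thesis
    by (simp add: eventually_sequentially)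
qed

end
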